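(* Let $T\ge1$, $\tau>0$ with $\tau L<\frac14$, and let $(x_t)$ be generated from a deterministic $x_0$ by the randomized incremental proximal method $x_{t+1}=\operatorname{prox}_{\tau m g_{j_t}}(x_t-\tau\nabla f_{i_t}(x_t))$. Let $\epsilon'>0$ be such that $a:=2\tau L(1+\epsilon')<1$, let $v=(1+1/\epsilon')\sigma_*^2\tau$, and define $\alpha_{-1}=\alpha_0=1$, $\alpha_t=\frac{T-t+2}{a+T-t+1}\alpha_{t-1}$ for $t=1,\dots,T$. Then \[ \mathbb{E}[h(x_{T+1})-h^*]\le\frac{1}{2\tau\alpha_T}\mathbb{E}\|x_0-x^*\|^2+\frac{v\alpha_0}{\alpha_T}+\frac{v}{\alpha_T}\sum_{t=1}^T\alpha_t+\frac{1}{\alpha_T}\mathbb{E}[h(x_0)-h^*]+\frac{8\tau m^2L_g^2}{\alpha_T}\sum_{t=0}^T\alpha_t. \]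
   Context: Let $D$ be a probability distribution on an index set, and for each index $i$ let $f_i:\mathbb{R}^n\to\mathbb{R}$ be convex and differentiable with $L$-Lipschitz gradient ($L>0$). Let $f(x)=\mathbb{E}_{i\sim D}[f_i(x)]$ with $\mathbb{E}_{i\sim D}[\nabla f_i(x)]=\nabla f(x)$. Let $g=\sum_{j=1}^m g_j$ with each $g_j:\mathbb{R}^n\to\mathbb{R}$ proper, convex, lower semicontinuous and $L_g$-Lipschitz. Let $h=f+g$, assume $\arg\min h\neq\emptyset$, $h^*=\min h$, and let $x^*\in\arg\min h$ be such that $\sigma_*^2:=\mathbb{E}_{i\sim D}\|\nabla f_i(x^* )\|^2<\infty$. $\operatorname{prox}_{\lambda\phi}(y)=\arg\min_z\{\lambda\phi(z)+\tfrac12\|y-z\|^2\}$. At each iteration $i_t\sim D$ and $j_t$ uniform on $\{1,\dots,m\}$, independent of each other and of $x_0,\dots,x_t$. *)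

theory Defs
  imports "HOL-Probability.Probability"
begin

definition prox :: "real \<Rightarrow> ('a::real_normed_vector \<Rightarrow> real) \<Rightarrow> 'a \<Rightarrow> 'a" where
  "prox lam phi y = (SOME z. \<forall>w. lam * phi z + (1/2) * (norm (y - z))\<^sup>2
                                 \<le> lam * phi w + (1/2) * (norm (y - w))\<^sup>2)"

fun alphaw :: "real \<Rightarrow> nat \<Rightarrow> nat \<Rightarrow> real" where
  "alphaw a T 0 = 1"
| "alphaw a T (Suc t) = (real T - real (Suc t) + 2) / (a + real T - real (Suc t) + 1) * alphaw a T t"

text \<open>Lower semicontinuity of a real-valued function on the whole space:
  f x \<le> liminf_{y \<rightarrow> x} f y, i.e. for every c < f x, eventually c < f y near x.\<close>
definition lsc :: "('a::topological_space \<Rightarrow> real) \<Rightarrow> bool" where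
  "lsc f \<longleftrightarrow> (\<forall>x. \<forall>c < f x. \<forall>\<^sub>F y in at x. c < f y)"

text \<open>Independence of two random variables with (possibly) different value types:
  the joint law is the product of the marginal laws (cf. indep_var_distribution_eq).\<close>
definition indep_rv :: "'w measure \<Rightarrow> 'a measure \<Rightarrow> ('w \<Rightarrow> 'a) \<Rightarrow> 'b measure \<Rightarrow> ('w \<Rightarrow> 'b) \<Rightarrow> bool" where
  "indep_rv M MA X MB Y \<longleftrightarrow> X \<in> measurable M MA \<and> Y \<in> measurable M MB \<and>
     distr M (MA \<Otimes>\<^sub>M MB) (\<lambda>\<omega>. (X \<omega>, Y \<omega>)) = distr M MA X \<Otimes>\<^sub>M distr M MB Y"

end

theory Submission
  imports Defs
begin

(* A Lyapunov argument in expectation. For every reference point z, one prox-gradient step with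
   sampled indices (i, j) satisfies a deterministic three-point inequality. Averaging over (i, j),
   which are independent of the past, turns the sampled gradient into the true one up to a variance
   term, and co-coercivity bounds that variance by 2 L (1 + eps) (h x_t - h x* ) + (1 + 1/eps) sigma*^2.
   Taking z to be an anchor Z_t, a convex combination of x* and the earlier iterates with weights
   given by the alpha_t, the potential
     tau alpha_(t-1) (h x_t - h x* ) + alpha_(t-1)/2 |Z_t - x_t|^2 + tau alpha_(t-1) (T - t + 1) (h Z_t - h x* )
   grows in expectation by at most tau alpha_t (v + 8 tau m^2 Lg^2) per step: the recursion defining
   alpha_t is exactly what lets the convexity of h absorb the term tau a (h x_t - h x* ). At t = T + 1
   the anchor carries no weight, and summing over the steps gives the bound. *)

lemma nonpos_if_le_small_multiples:
  fixes A B :: real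
  assumes "\<And>s. 0 < s \<Longrightarrow> s \<le> 1 \<Longrightarrow> A \<le> s * B"
  shows "A \<le> 0"
proof (rule ccontr)
  assume A: "\<not> A \<le> 0"
  show False
  proof (cases "B \<le> 0")
    case True
    then show False using assms[of 1] A by simp
  next
    case False
    define s where "s = min 1 (A / (2 * B))"
    have "0 < s" using A False by (simp add: s_def)
    have "s * B \<le> A / (2 * B) * B" using False by (intro mult_right_mono) (auto simp: s_def)
    also have "\<dots> = A / 2" using False by simp
    finally show False using assms[OF \<open>0 < s\<close>] A by (simp add: s_def)
  qed
qed

lemma power2_norm_add:
  fixes a b :: "'a::real_inner"
  shows "(norm (a + b))\<^sup>2 = (norm a)\<^sup>2 + 2 * (a \<bullet> b) + (norm b)\<^sup>2"
  by (simp add: power2_norm_eq_inner inner_add_left inner_add_right inner_commute)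

lemma power2_norm_diff:
  fixes a b :: "'a::real_inner"
  shows "(norm (a - b))\<^sup>2 = (norm a)\<^sup>2 - 2 * (a \<bullet> b) + (norm b)\<^sup>2"
  by (simp add: power2_norm_eq_inner inner_diff_left inner_diff_right inner_commute)

lemma power2_norm_add_le:
  fixes a b :: "'a::real_inner"
  assumes "\<epsilon> > 0"
  shows "(norm (a + b))\<^sup>2 \<le> (1 + \<epsilon>) * (norm a)\<^sup>2 + (1 + 1 / \<epsilon>) * (norm b)\<^sup>2"
proof -
  have "a \<bullet> b \<le> norm a * norm b" by (metis Cauchy_Schwarz_ineq2 abs_le_D1)
  moreover have "2 * (norm a * norm b) \<le> \<epsilon> * (norm a)\<^sup>2 + (1 / \<epsilon>) * (norm b)\<^sup>2"
  proof -
    have "0 \<le> (\<epsilon> * norm a - norm b)\<^sup>2 / \<epsilon>" using assms by simp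
    also have "\<dots> = \<epsilon> * (norm a)\<^sup>2 - 2 * (norm a * norm b) + (1 / \<epsilon>) * (norm b)\<^sup>2"
      using assms by (simp add: power2_eq_square field_simps)
    finally show ?thesis by simp
  qed
  ultimately show ?thesis unfolding power2_norm_add by (simp add: algebra_simps)
qed

lemma power2_norm_add_le2:
  fixes a b :: "'a::real_inner"
  shows "(norm (a + b))\<^sup>2 \<le> 2 * (norm a)\<^sup>2 + 2 * (norm b)\<^sup>2"
  using power2_norm_add_le[of 1 a b] by simp

lemma neg_inner_le:
  fixes a b :: "'a::real_inner"
  shows "- (a \<bullet> b) \<le> (norm a)\<^sup>2 + (norm b)\<^sup>2 / 4"
proof -
  have "0 \<le> (norm (a + b /\<^sub>R 2))\<^sup>2" by simp
  then show ?thesis unfolding power2_norm_add by (simp add: power_divide)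
qed

section \<open>Smooth convex functions\<close>

lemma has_real_derivative_along_line:
  fixes \<phi> :: "'a::real_inner \<Rightarrow> real"
  assumes "(\<phi> has_derivative (\<lambda>u. d \<bullet> u)) (at (x + s *\<^sub>R v))"
  shows "((\<lambda>s. \<phi> (x + s *\<^sub>R v)) has_real_derivative d \<bullet> v) (at s)"
proof -
  have "((\<lambda>s. x + s *\<^sub>R v) has_derivative (\<lambda>r. r *\<^sub>R v)) (at s)"
    by (auto intro!: derivative_eq_intros)
  from diff_chain_at[OF this assms]
  have "((\<lambda>s. \<phi> (x + s *\<^sub>R v)) has_derivative (\<lambda>r. d \<bullet> (r *\<^sub>R v))) (at s)"
    by (simp add: o_def)
  moreover have "(\<lambda>r. d \<bullet> (r *\<^sub>R v)) = (*) (d \<bullet> v)" by (rule ext) simp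
  ultimately show ?thesis unfolding has_field_derivative_def by simp
qed

lemma convex_on_along_line:
  fixes \<phi> :: "'a::real_vector \<Rightarrow> real"
  assumes "convex_on UNIV \<phi>"
  shows "convex_on UNIV (\<lambda>s. \<phi> (x + s *\<^sub>R v))"
proof (rule convex_onI)
  fix u s t :: real assume "0 < u" "u < 1"
  have "x + ((1 - u) *\<^sub>R s + u *\<^sub>R t) *\<^sub>R v = (1 - u) *\<^sub>R (x + s *\<^sub>R v) + u *\<^sub>R (x + t *\<^sub>R v)"
    by (simp add: algebra_simps)
  then show "\<phi> (x + ((1 - u) *\<^sub>R s + u *\<^sub>R t) *\<^sub>R v) \<le> (1 - u) * \<phi> (x + s *\<^sub>R v) + u * \<phi> (x + t *\<^sub>R v)"
    using convex_onD[OF assms, of u "x + s *\<^sub>R v" "x + t *\<^sub>R v"] \<open>0 < u\<close> \<open>u < 1\<close>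
    by (simp only:) simp
qed simp

lemma convex_gradient_inequality:
  fixes \<phi> :: "'a::real_inner \<Rightarrow> real"
  assumes "convex_on UNIV \<phi>" and "(\<phi> has_derivative (\<lambda>u. d \<bullet> u)) (at x)"
  shows "\<phi> x + d \<bullet> (z - x) \<le> \<phi> z"
proof -
  let ?\<psi> = "\<lambda>s. \<phi> (x + s *\<^sub>R (z - x))"
  have "(?\<psi> has_real_derivative d \<bullet> (z - x)) (at 0 within UNIV)"
    using has_real_derivative_along_line[of \<phi> d x 0 "z - x"] assms(2) by simp
  from convex_on_imp_above_tangent[OF convex_on_along_line[OF assms(1), where x = x and v = "z - x"]
      connected_UNIV _ _ this, where x = 1]
  show ?thesis by simp
qed

lemma lipschitz_gradient_upper_bound:
  fixes \<phi> :: "'a::real_inner \<Rightarrow> real"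
  assumes der: "\<And>y. (\<phi> has_derivative (\<lambda>u. d y \<bullet> u)) (at y)"
    and lip: "L-lipschitz_on UNIV d"
  shows "\<phi> y \<le> \<phi> x + d x \<bullet> (y - x) + L / 2 * (norm (y - x))\<^sup>2"
proof -
  define v where "v = y - x"
  let ?k = "\<lambda>s. \<phi> (x + s *\<^sub>R v) - s * (d x \<bullet> v) - L / 2 * s\<^sup>2 * (norm v)\<^sup>2"
  have "?k 1 \<le> ?k 0"
  proof (rule DERIV_nonpos_imp_nonincreasing[of 0 1 ?k])
    fix s :: real assume "0 \<le> s" "s \<le> 1"
    have "(d (x + s *\<^sub>R v) - d x) \<bullet> v \<le> norm (d (x + s *\<^sub>R v) - d x) * norm v"
      by (metis Cauchy_Schwarz_ineq2 abs_le_D1)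
    also have "\<dots> \<le> L * norm (s *\<^sub>R v) * norm v"
      using lip unfolding lipschitz_on_def
      by (intro mult_right_mono) (metis UNIV_I add_diff_cancel_left' dist_norm, simp)
    also have "\<dots> = L * s * (norm v)\<^sup>2" using \<open>0 \<le> s\<close> by (simp add: power2_eq_square)
    finally have "d (x + s *\<^sub>R v) \<bullet> v - d x \<bullet> v - L * s * (norm v)\<^sup>2 \<le> 0"
      by (simp add: inner_diff_left)
    moreover have "(?k has_real_derivative d (x + s *\<^sub>R v) \<bullet> v - d x \<bullet> v - L * s * (norm v)\<^sup>2) (at s)"
      by (rule derivative_eq_intros has_real_derivative_along_line[OF der] refl | simp)+
    ultimately show "\<exists>y. DERIV ?k s :> y \<and> y \<le> 0" by blast
  qed simp
  then show ?thesis by (simp add: v_def)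
qed

lemma cocoercive_gradient:
  fixes \<phi> :: "'a::real_inner \<Rightarrow> real"
  assumes cvx: "convex_on UNIV \<phi>"
    and der: "\<And>y. (\<phi> has_derivative (\<lambda>u. d y \<bullet> u)) (at y)"
    and lip: "L-lipschitz_on UNIV d" and "L > 0"
  shows "(norm (d x - d y))\<^sup>2 \<le> 2 * L * (\<phi> x - \<phi> y - d y \<bullet> (x - y))"
proof -
  define u where "u = d x - d y"
  define w where "w = x - (1 / L) *\<^sub>R u"
  \<comment> \<open>Compare the tangent of \<open>\<phi>\<close> at \<open>y\<close> with the descent bound at \<open>x\<close>, both evaluated at \<open>w\<close>.\<close>
  have "\<phi> y + d y \<bullet> (w - y) \<le> \<phi> w"
    by (rule convex_gradient_inequality[OF cvx der])
  also have "\<phi> w \<le> \<phi> x + d x \<bullet> (w - x) + L / 2 * (norm (w - x))\<^sup>2"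
    by (rule lipschitz_gradient_upper_bound[OF der lip])
  also have "L / 2 * (norm (w - x))\<^sup>2 = (norm u)\<^sup>2 / (2 * L)"
    using \<open>L > 0\<close> by (simp add: w_def power_mult_distrib power2_eq_square)
  finally have "(d x \<bullet> u - d y \<bullet> u) / L - (norm u)\<^sup>2 / (2 * L) \<le> \<phi> x - \<phi> y - d y \<bullet> (x - y)"
    by (simp add: w_def inner_diff_right diff_divide_distrib)
  moreover have "d x \<bullet> u - d y \<bullet> u = (norm u)\<^sup>2"
    by (simp add: u_def power2_norm_eq_inner inner_diff_left)
  ultimately have "(norm u)\<^sup>2 / (2 * L) \<le> \<phi> x - \<phi> y - d y \<bullet> (x - y)"
    by (simp add: field_simps)
  then show ?thesis using \<open>L > 0\<close> by (simp add: u_def field_simps)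
qed

section \<open>The proximal operator\<close>

definition is_prox :: "real \<Rightarrow> ('a::real_normed_vector \<Rightarrow> real) \<Rightarrow> 'a \<Rightarrow> 'a \<Rightarrow> bool" where
  "is_prox lam \<phi> y z \<longleftrightarrow>
     (\<forall>w. lam * \<phi> z + 1 / 2 * (norm (y - z))\<^sup>2 \<le> lam * \<phi> w + 1 / 2 * (norm (y - w))\<^sup>2)"

lemma is_prox_prox:
  fixes \<phi> :: "'a::euclidean_space \<Rightarrow> real"
  assumes lip: "C-lipschitz_on UNIV \<phi>" and "lam > 0"
  shows "is_prox lam \<phi> y (prox lam \<phi> y)"
proof -
  define \<psi> where "\<psi> = (\<lambda>w. lam * \<phi> w + 1 / 2 * (norm (y - w))\<^sup>2)"
  define R where "R = 2 * lam * C + 1"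
  have "C \<ge> 0" using lip by (auto simp: lipschitz_on_def)
  then have "R > 0" using \<open>lam > 0\<close> unfolding R_def by (simp add: add_nonneg_pos)
  have "continuous_on (cball y R) \<psi>"
    unfolding \<psi>_def by (intro continuous_intros continuous_on_subset[OF lipschitz_on_continuous_on[OF lip]]) auto
  moreover have "cball y R \<noteq> {}" using \<open>R > 0\<close> by simp
  ultimately obtain p where p: "p \<in> cball y R" "\<And>w. w \<in> cball y R \<Longrightarrow> \<psi> p \<le> \<psi> w"
    using continuous_attains_inf[OF compact_cball] by blast
  \<comment> \<open>Outside the ball the quadratic term outgrows the Lipschitz decrease of \<open>\<phi>\<close>.\<close>
  have "\<psi> p \<le> \<psi> w" for w
  proof (cases "w \<in> cball y R")
    case False
    then have far: "norm (w - y) > R" by (simp add: dist_norm norm_minus_commute)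
    have "\<phi> y - \<phi> w \<le> C * norm (w - y)"
      using lip unfolding lipschitz_on_def
      by (metis UNIV_I abs_le_D1 dist_norm dist_real_def norm_minus_commute)
    then have "lam * \<phi> y \<le> lam * \<phi> w + lam * C * norm (w - y)"
      using \<open>lam > 0\<close> mult_left_mono[of "\<phi> y" "\<phi> w + C * norm (w - y)" lam]
      by (simp add: algebra_simps)
    moreover have "lam * C * norm (w - y) < 1 / 2 * norm (w - y) * norm (w - y)"
      using far \<open>R > 0\<close> by (intro mult_strict_right_mono) (auto simp: R_def)
    ultimately have "\<psi> y < \<psi> w" by (simp add: \<psi>_def norm_minus_commute power2_eq_square)
    then show ?thesis using p(2)[of y] \<open>R > 0\<close> by simp
  qed (use p in simp)
  then have "\<exists>z. is_prox lam \<phi> y z" unfolding is_prox_def \<psi>_def by blast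
  then show ?thesis unfolding prox_def is_prox_def[symmetric] by (rule someI_ex)
qed

lemma is_prox_three_point:
  fixes \<phi> :: "'a::real_inner \<Rightarrow> real"
  assumes cvx: "convex_on UNIV \<phi>" and p: "is_prox lam \<phi> y p" and "lam \<ge> 0"
  shows "lam * \<phi> p + 1 / 2 * (norm (y - p))\<^sup>2 + 1 / 2 * (norm (w - p))\<^sup>2
           \<le> lam * \<phi> w + 1 / 2 * (norm (y - w))\<^sup>2"
proof -
  \<comment> \<open>First-order optimality of \<open>p\<close>, tested along the segment from \<open>p\<close> to \<open>w\<close>.\<close>
  have "(y - p) \<bullet> (w - p) - lam * (\<phi> w - \<phi> p) \<le> 0"
  proof (rule nonpos_if_le_small_multiples)
    fix s :: real assume s: "0 < s" "s \<le> 1"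
    define c where "c = (1 - s) *\<^sub>R p + s *\<^sub>R w"
    have "y - c = (y - p) - s *\<^sub>R (w - p)"
      by (simp add: c_def algebra_simps)
    have "(norm (y - c))\<^sup>2 = (norm (y - p))\<^sup>2 - 2 * s * ((y - p) \<bullet> (w - p)) + s\<^sup>2 * (norm (w - p))\<^sup>2"
      unfolding \<open>y - c = _\<close> using power2_norm_diff[of "y - p" "s *\<^sub>R (w - p)"] by (simp add: power_mult_distrib)
    then have "lam * \<phi> p + 1 / 2 * (norm (y - p))\<^sup>2
          \<le> lam * \<phi> c + 1 / 2 * ((norm (y - p))\<^sup>2 - 2 * s * ((y - p) \<bullet> (w - p)) + s\<^sup>2 * (norm (w - p))\<^sup>2)"
      using p unfolding is_prox_def by metis
    moreover have "lam * \<phi> c \<le> lam * ((1 - s) * \<phi> p + s * \<phi> w)"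
      using convex_onD[OF cvx, of s p w] s \<open>lam \<ge> 0\<close> by (intro mult_left_mono) (auto simp: c_def)
    ultimately have "s * ((y - p) \<bullet> (w - p) - lam * (\<phi> w - \<phi> p)) \<le> s * (s * (1 / 2 * (norm (w - p))\<^sup>2))"
      by (simp add: algebra_simps power2_eq_square)
    then show "(y - p) \<bullet> (w - p) - lam * (\<phi> w - \<phi> p) \<le> s * (1 / 2 * (norm (w - p))\<^sup>2)"
      using s by simp
  qed
  moreover have "y - w = (y - p) - (w - p)" by simp
  ultimately show ?thesis
    by (simp only: power2_norm_diff) (simp add: algebra_simps)
qed

lemma is_prox_gradient_step:
  fixes \<phi> :: "'a::real_inner \<Rightarrow> real"
  assumes "convex_on UNIV \<phi>" and "is_prox lam \<phi> (y - \<tau> *\<^sub>R v) p" and "lam \<ge> 0"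
  shows "lam * \<phi> p + \<tau> * (v \<bullet> (p - z)) + 1 / 2 * (norm (p - y))\<^sup>2 + 1 / 2 * (norm (z - p))\<^sup>2
           \<le> lam * \<phi> z + 1 / 2 * (norm (z - y))\<^sup>2"
proof -
  have sq: "(norm ((y - \<tau> *\<^sub>R v) - w))\<^sup>2 = (norm (w - y))\<^sup>2 + 2 * \<tau> * (v \<bullet> (w - y)) + \<tau>\<^sup>2 * (norm v)\<^sup>2"
    for w
  proof -
    have "(y - \<tau> *\<^sub>R v) - w = - ((w - y) + \<tau> *\<^sub>R v)" by (simp add: algebra_simps)
    then show ?thesis
      by (simp only: norm_minus_cancel power2_norm_add) (simp add: power_mult_distrib inner_commute)
  qed
  from is_prox_three_point[OF assms, of z] show ?thesis
    unfolding sq by (simp add: inner_diff_right algebra_simps)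
qed

section \<open>Probability\<close>

lemma (in prob_space) centered_second_moment_le:
  fixes X :: "'a \<Rightarrow> 'b::euclidean_space"
  assumes X: "integrable M X" and X2: "integrable M (\<lambda>x. (norm (X x))\<^sup>2)"
  shows "(\<integral>x. (norm (X x - (\<integral>x. X x \<partial>M)))\<^sup>2 \<partial>M) \<le> (\<integral>x. (norm (X x))\<^sup>2 \<partial>M)"
proof -
  define c where "c = (\<integral>x. X x \<partial>M)"
  have "(\<integral>x. (norm (X x - c))\<^sup>2 \<partial>M) = (\<integral>x. (norm (X x))\<^sup>2 - 2 * (X x \<bullet> c) + (norm c)\<^sup>2 \<partial>M)"
    by (simp add: power2_norm_diff)
  also have "\<dots> = (\<integral>x. (norm (X x))\<^sup>2 \<partial>M) - (norm c)\<^sup>2"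
    using X X2 by (simp add: c_def power2_norm_eq_inner prob_space)
  finally show ?thesis by (simp add: c_def)
qed

text \<open>This replaces conditioning on the past: independence makes the joint law a product measure,
  so Tonelli's theorem applies.\<close>

lemma nn_integral_indep_rv_le:
  fixes M :: "'w measure" and X :: "'w \<Rightarrow> 'x" and Y :: "'w \<Rightarrow> 'y"
  assumes "prob_space M" and ind: "indep_rv M MX X MY Y"
    and \<Phi>: "\<Phi> \<in> borel_measurable (MX \<Otimes>\<^sub>M MY)" and Q: "Q \<in> borel_measurable MY"
    and bound: "\<And>y. y \<in> space MY \<Longrightarrow> (\<integral>\<^sup>+ \<omega>. \<Phi> (X \<omega>, y) \<partial>M) \<le> Q y"
  shows "(\<integral>\<^sup>+ \<omega>. \<Phi> (X \<omega>, Y \<omega>) \<partial>M) \<le> (\<integral>\<^sup>+ \<omega>. Q (Y \<omega>) \<partial>M)"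
proof -
  interpret M: prob_space M by fact
  have X: "X \<in> measurable M MX" and Y: "Y \<in> measurable M MY"
    and joint: "distr M (MX \<Otimes>\<^sub>M MY) (\<lambda>\<omega>. (X \<omega>, Y \<omega>)) = distr M MX X \<Otimes>\<^sub>M distr M MY Y"
    using ind unfolding indep_rv_def by auto
  interpret PX: prob_space "distr M MX X" by (rule M.prob_space_distr[OF X])
  interpret PY: prob_space "distr M MY Y" by (rule M.prob_space_distr[OF Y])
  interpret P: pair_sigma_finite "distr M MX X" "distr M MY Y" ..
  have "sets (distr M MX X \<Otimes>\<^sub>M distr M MY Y) = sets (MX \<Otimes>\<^sub>M MY)"
    by (rule sets_pair_measure_cong) simp_all
  with \<Phi> have \<Phi>': "\<Phi> \<in> borel_measurable (distr M MX X \<Otimes>\<^sub>M distr M MY Y)"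
    using measurable_cong_sets[OF _ refl] by metis
  have "(\<integral>\<^sup>+ \<omega>. \<Phi> (X \<omega>, Y \<omega>) \<partial>M) = (\<integral>\<^sup>+ q. \<Phi> q \<partial>distr M (MX \<Otimes>\<^sub>M MY) (\<lambda>\<omega>. (X \<omega>, Y \<omega>)))"
    using \<Phi> by (subst nn_integral_distr[OF measurable_Pair[OF X Y]]) auto
  also have "\<dots> = (\<integral>\<^sup>+ y. (\<integral>\<^sup>+ x. \<Phi> (x, y) \<partial>distr M MX X) \<partial>distr M MY Y)"
    unfolding joint by (rule P.nn_integral_snd[OF \<Phi>', symmetric])
  also have "\<dots> \<le> (\<integral>\<^sup>+ y. Q y \<partial>distr M MY Y)"
  proof (rule nn_integral_mono)
    fix y assume "y \<in> space (distr M MY Y)"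
    then have y: "y \<in> space MY" by simp
    have "(\<lambda>x. (x, y)) \<in> measurable MX (MX \<Otimes>\<^sub>M MY)"
      by (rule measurable_Pair[OF measurable_ident_sets[OF refl] measurable_const[OF y]])
    then have "(\<lambda>x. \<Phi> (x, y)) \<in> borel_measurable MX"
      using \<Phi> by (rule measurable_compose)
    then have "(\<integral>\<^sup>+ x. \<Phi> (x, y) \<partial>distr M MX X) = (\<integral>\<^sup>+ \<omega>. \<Phi> (X \<omega>, y) \<partial>M)"
      by (subst nn_integral_distr[OF X]) auto
    also have "\<dots> \<le> Q y" using bound[OF y] .
    finally show "(\<integral>\<^sup>+ x. \<Phi> (x, y) \<partial>distr M MX X) \<le> Q y" .
  qed
  also have "\<dots> = (\<integral>\<^sup>+ \<omega>. Q (Y \<omega>) \<partial>M)"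
    using Q by (subst nn_integral_distr[OF Y]) auto
  finally show ?thesis .
qed

section \<open>The composite problem\<close>

locale composite_problem =
  fixes D :: "'i measure" and f :: "'i \<Rightarrow> 'a::euclidean_space \<Rightarrow> real" and df :: "'i \<Rightarrow> 'a \<Rightarrow> 'a"
    and g :: "nat \<Rightarrow> 'a \<Rightarrow> real" and m :: nat and L Lg :: real and xs :: 'a
  assumes prob_space_D: "prob_space D"
    and L_pos: "L > 0" and m_pos: "m \<ge> 1"
    and f_convex: "\<And>i. i \<in> space D \<Longrightarrow> convex_on UNIV (f i)"
    and f_deriv: "\<And>i y. i \<in> space D \<Longrightarrow> (f i has_derivative (\<lambda>u. df i y \<bullet> u)) (at y)"
    and df_lipschitz: "\<And>i. i \<in> space D \<Longrightarrow> L-lipschitz_on UNIV (df i)"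
    and df_measurable: "(\<lambda>p. df (fst p) (snd p)) \<in> borel_measurable (D \<Otimes>\<^sub>M borel)"
    and f_integrable: "\<And>y. integrable D (\<lambda>i. f i y)"
    and df_integrable: "\<And>y. integrable D (\<lambda>i. df i y)"
    and smooth_deriv: "\<And>y. ((\<lambda>y. \<integral>i. f i y \<partial>D) has_derivative (\<lambda>u. (\<integral>i. df i y \<partial>D) \<bullet> u)) (at y)"
    and g_convex: "\<And>j. j \<in> {1..m} \<Longrightarrow> convex_on UNIV (g j)"
    and g_lipschitz: "\<And>j. j \<in> {1..m} \<Longrightarrow> Lg-lipschitz_on UNIV (g j)"
    and xs_min: "\<And>y. (\<integral>i. f i xs \<partial>D) + (\<Sum>j = 1..m. g j xs) \<le> (\<integral>i. f i y \<partial>D) + (\<Sum>j = 1..m. g j y)"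
    and df_xs_square_integrable: "integrable D (\<lambda>i. (norm (df i xs))\<^sup>2)"
begin

sublocale D: prob_space D by (rule prob_space_D)

definition smooth_part :: "'a \<Rightarrow> real" where
  "smooth_part y = (\<integral>i. f i y \<partial>D)"

definition smooth_grad :: "'a \<Rightarrow> 'a" where
  "smooth_grad y = (\<integral>i. df i y \<partial>D)"

definition nonsmooth_part :: "'a \<Rightarrow> real" where
  "nonsmooth_part y = (\<Sum>j = 1..m. g j y)"

definition objective :: "'a \<Rightarrow> real" where
  "objective y = smooth_part y + nonsmooth_part y"

definition grad_variance_at_min :: real where
  "grad_variance_at_min = (\<integral>i. (norm (df i xs))\<^sup>2 \<partial>D)"

lemma objective_min: "objective xs \<le> objective y"
  using xs_min unfolding objective_def smooth_part_def nonsmooth_part_def .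

lemma df_diff_le: "i \<in> space D \<Longrightarrow> norm (df i y - df i y') \<le> L * norm (y - y')"
  using df_lipschitz[of i] by (auto simp: lipschitz_on_def dist_norm)

lemma g_diff_le: "j \<in> {1..m} \<Longrightarrow> \<bar>g j y - g j y'\<bar> \<le> Lg * norm (y - y')"
  using g_lipschitz[of j] by (auto simp: lipschitz_on_def dist_real_def dist_norm)

lemma smooth_grad_lipschitz: "L-lipschitz_on UNIV smooth_grad"
proof (rule lipschitz_onI)
  fix y y' :: 'a
  have "dist (smooth_grad y) (smooth_grad y') = norm (\<integral>i. df i y - df i y' \<partial>D)"
    using df_integrable by (simp add: smooth_grad_def dist_norm)
  also have "\<dots> \<le> (\<integral>i. norm (df i y - df i y') \<partial>D)" by (rule integral_norm_bound)
  also have "\<dots> \<le> (\<integral>i. L * dist y y' \<partial>D)"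
    using df_integrable L_pos by (intro integral_mono') (auto simp: dist_norm df_diff_le)
  finally show "dist (smooth_grad y) (smooth_grad y') \<le> L * dist y y'" by (simp add: D.prob_space)
qed (use L_pos in simp)

lemma smooth_part_deriv: "(smooth_part has_derivative (\<lambda>u. smooth_grad y \<bullet> u)) (at y)"
  using smooth_deriv[of y] unfolding smooth_part_def[abs_def] smooth_grad_def .

lemma smooth_part_convex: "convex_on UNIV smooth_part"
proof (rule convex_onI)
  fix t y y' :: _ assume "0 < (t::real)" "t < 1"
  then have "smooth_part ((1 - t) *\<^sub>R y + t *\<^sub>R y') \<le> (\<integral>i. (1 - t) * f i y + t * f i y' \<partial>D)"
    unfolding smooth_part_def using f_integrable by (intro integral_mono convex_onD[OF f_convex]) auto
  also have "\<dots> = (1 - t) * smooth_part y + t * smooth_part y'"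
    using f_integrable by (simp add: smooth_part_def)
  finally show "smooth_part ((1 - t) *\<^sub>R y + t *\<^sub>R y') \<le> (1 - t) * smooth_part y + t * smooth_part y'" .
qed simp

lemma smooth_part_gradient_inequality: "smooth_part y + smooth_grad y \<bullet> (z - y) \<le> smooth_part z"
  by (rule convex_gradient_inequality[OF smooth_part_convex smooth_part_deriv])

lemma smooth_part_upper_bound:
  "smooth_part z \<le> smooth_part y + smooth_grad y \<bullet> (z - y) + L / 2 * (norm (z - y))\<^sup>2"
  by (rule lipschitz_gradient_upper_bound[OF smooth_part_deriv smooth_grad_lipschitz])

lemma nonsmooth_part_convex: "convex_on UNIV nonsmooth_part"
proof (rule convex_onI)
  fix t y y' :: _ assume "0 < (t::real)" "t < 1"
  then have "nonsmooth_part ((1 - t) *\<^sub>R y + t *\<^sub>R y') \<le> (\<Sum>j = 1..m. (1 - t) * g j y + t * g j y')"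
    unfolding nonsmooth_part_def by (intro sum_mono convex_onD[OF g_convex]) auto
  then show "nonsmooth_part ((1 - t) *\<^sub>R y + t *\<^sub>R y') \<le> (1 - t) * nonsmooth_part y + t * nonsmooth_part y'"
    by (simp add: nonsmooth_part_def sum.distrib sum_distrib_left)
qed simp

lemma objective_convex: "convex_on UNIV objective"
  unfolding objective_def[abs_def] using smooth_part_convex nonsmooth_part_convex by (rule convex_on_add)

lemma nonsmooth_part_diff_le: "\<bar>nonsmooth_part y - nonsmooth_part y'\<bar> \<le> real m * Lg * norm (y - y')"
proof -
  have "\<bar>nonsmooth_part y - nonsmooth_part y'\<bar> \<le> (\<Sum>j = 1..m. \<bar>g j y - g j y'\<bar>)"
    unfolding nonsmooth_part_def sum_subtractf[symmetric] by (rule sum_abs)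
  also have "\<dots> \<le> (\<Sum>j = 1..m. Lg * norm (y - y'))" by (intro sum_mono g_diff_le)
  finally show ?thesis by simp
qed

text \<open>A form of the first-order optimality condition for \<open>xs\<close>.\<close>

lemma bregman_le_objective_gap:
  "smooth_part y - smooth_part xs - smooth_grad xs \<bullet> (y - xs) \<le> objective y - objective xs"
proof -
  define v where "v = y - xs"
  have "- (smooth_grad xs \<bullet> v + (nonsmooth_part y - nonsmooth_part xs)) \<le> 0"
  proof (rule nonpos_if_le_small_multiples)
    fix s :: real assume s: "0 < s" "s \<le> 1"
    have "objective xs \<le> objective (xs + s *\<^sub>R v)" by (rule objective_min)
    moreover have "smooth_part (xs + s *\<^sub>R v) \<le> smooth_part xs + s * (smooth_grad xs \<bullet> v) + s * (s * (L / 2 * (norm v)\<^sup>2))"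
      using smooth_part_upper_bound[of "xs + s *\<^sub>R v" xs] s by (simp add: power_mult_distrib power2_eq_square mult_ac)
    moreover have "nonsmooth_part (xs + s *\<^sub>R v) \<le> (1 - s) * nonsmooth_part xs + s * nonsmooth_part y"
      using convex_onD[OF nonsmooth_part_convex, of s xs y] s by (simp add: v_def algebra_simps)
    ultimately have "0 \<le> s * (smooth_grad xs \<bullet> v + (nonsmooth_part y - nonsmooth_part xs) + s * (L / 2 * (norm v)\<^sup>2))"
      unfolding objective_def by (simp add: algebra_simps)
    then show "- (smooth_grad xs \<bullet> v + (nonsmooth_part y - nonsmooth_part xs)) \<le> s * (L / 2 * (norm v)\<^sup>2)"
      using s by (simp add: zero_le_mult_iff)
  qed
  then show ?thesis by (simp add: objective_def v_def)
qed

lemma df_measurable_at: "(\<lambda>i. df i y) \<in> borel_measurable D"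
  using df_integrable[of y] by auto

lemma df_diff_square_integrable: "integrable D (\<lambda>i. (norm (df i y - df i y' - c))\<^sup>2)"
proof (rule D.integrable_const_bound[where B = "2 * (L * norm (y - y'))\<^sup>2 + 2 * (norm c)\<^sup>2"])
  show "AE i in D. norm ((norm (df i y - df i y' - c))\<^sup>2) \<le> 2 * (L * norm (y - y'))\<^sup>2 + 2 * (norm c)\<^sup>2"
  proof (rule AE_I2)
    fix i assume "i \<in> space D"
    then have "(norm (df i y - df i y'))\<^sup>2 \<le> (L * norm (y - y'))\<^sup>2"
      by (intro power_mono df_diff_le) auto
    then show "norm ((norm (df i y - df i y' - c))\<^sup>2) \<le> 2 * (L * norm (y - y'))\<^sup>2 + 2 * (norm c)\<^sup>2"
      using power2_norm_add_le2[of "df i y - df i y'" "- c"] by simp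
  qed
qed (use df_measurable_at in measurable)

lemma df_square_integrable: "integrable D (\<lambda>i. (norm (df i y - c))\<^sup>2)"
proof (rule Bochner_Integration.integrable_bound)
  show "integrable D (\<lambda>i. 2 * (norm (df i y - df i xs - c))\<^sup>2 + 2 * (norm (df i xs))\<^sup>2)"
    using df_diff_square_integrable df_xs_square_integrable by auto
  show "AE i in D. norm ((norm (df i y - c))\<^sup>2) \<le> norm (2 * (norm (df i y - df i xs - c))\<^sup>2 + 2 * (norm (df i xs))\<^sup>2)"
    using power2_norm_add_le2[of "df i y - df i xs - c" "df i xs" for i] by simp
qed (use df_measurable_at in measurable)

lemma grad_variance_le:
  assumes "\<epsilon> > 0"
  shows "(\<integral>i. (norm (df i y - smooth_grad y))\<^sup>2 \<partial>D)
           \<le> (1 + \<epsilon>) * (2 * L * (objective y - objective xs)) + (1 + 1 / \<epsilon>) * grad_variance_at_min"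
proof -
  define u where "u = (\<lambda>i. df i y - df i xs)"
  define w where "w = (\<lambda>i. df i xs - smooth_grad xs)"
  define Eu where "Eu = smooth_grad y - smooth_grad xs"
  have Eu: "(\<integral>i. u i \<partial>D) = Eu"
    using df_integrable by (simp add: u_def Eu_def smooth_grad_def)
  have iu: "integrable D (\<lambda>i. (norm (u i - Eu))\<^sup>2)" "integrable D (\<lambda>i. (norm (u i))\<^sup>2)"
    unfolding u_def using df_diff_square_integrable[of y xs Eu] df_diff_square_integrable[of y xs 0] by auto
  have iw: "integrable D (\<lambda>i. (norm (w i))\<^sup>2)"
    unfolding w_def by (rule df_square_integrable)
  have "(\<integral>i. (norm (df i y - smooth_grad y))\<^sup>2 \<partial>D)
        \<le> (\<integral>i. (1 + \<epsilon>) * (norm (u i - Eu))\<^sup>2 + (1 + 1 / \<epsilon>) * (norm (w i))\<^sup>2 \<partial>D)"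
  proof (rule integral_mono)
    fix i
    have "df i y - smooth_grad y = (u i - Eu) + w i" by (simp add: u_def w_def Eu_def)
    then show "(norm (df i y - smooth_grad y))\<^sup>2 \<le> (1 + \<epsilon>) * (norm (u i - Eu))\<^sup>2 + (1 + 1 / \<epsilon>) * (norm (w i))\<^sup>2"
      using power2_norm_add_le[OF assms] by metis
  qed (use iu iw df_square_integrable in auto)
  also have "\<dots> = (1 + \<epsilon>) * (\<integral>i. (norm (u i - Eu))\<^sup>2 \<partial>D) + (1 + 1 / \<epsilon>) * (\<integral>i. (norm (w i))\<^sup>2 \<partial>D)"
    using iu iw by simp
  also have "(\<integral>i. (norm (u i - Eu))\<^sup>2 \<partial>D) \<le> 2 * L * (objective y - objective xs)"
  proof -
    have "(\<integral>i. (norm (u i - Eu))\<^sup>2 \<partial>D) \<le> (\<integral>i. (norm (u i))\<^sup>2 \<partial>D)"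
      using D.centered_second_moment_le[of u] Eu iu df_integrable by (simp add: u_def)
    also have "\<dots> \<le> (\<integral>i. 2 * L * (f i y - f i xs - df i xs \<bullet> (y - xs)) \<partial>D)"
      using iu f_integrable df_integrable L_pos
      by (intro integral_mono) (auto simp: u_def intro!: cocoercive_gradient f_convex f_deriv df_lipschitz)
    also have "\<dots> = 2 * L * (smooth_part y - smooth_part xs - smooth_grad xs \<bullet> (y - xs))"
      using f_integrable df_integrable by (simp add: smooth_part_def smooth_grad_def)
    also have "\<dots> \<le> 2 * L * (objective y - objective xs)"
      using bregman_le_objective_gap[of y] L_pos by (intro mult_left_mono) auto
    finally show ?thesis .
  qed
  also have "(\<integral>i. (norm (w i))\<^sup>2 \<partial>D) \<le> grad_variance_at_min"
    unfolding grad_variance_at_min_def w_def smooth_grad_def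
    using D.centered_second_moment_le[of "\<lambda>i. df i xs"] df_integrable df_xs_square_integrable by simp
  finally show ?thesis using assms by (simp add: mult_left_mono add_mono)
qed

lemma df_measurable_comp [measurable (raw)]:
  assumes "a \<in> measurable N D" and "b \<in> borel_measurable N"
  shows "(\<lambda>q. df (a q) (b q)) \<in> borel_measurable N"
  using measurable_compose[OF measurable_Pair[OF assms] df_measurable] by simp

lemma smooth_grad_borel [measurable]: "smooth_grad \<in> borel_measurable borel"
  using lipschitz_on_continuous_on[OF smooth_grad_lipschitz] by (rule borel_measurable_continuous_onI)

lemma smooth_part_borel [measurable]: "smooth_part \<in> borel_measurable borel"
proof (rule borel_measurable_continuous_onI)
  show "continuous_on UNIV smooth_part"
    using smooth_part_deriv has_derivative_continuous continuous_at_imp_continuous_on by blast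
qed

lemma nonsmooth_part_borel [measurable]: "nonsmooth_part \<in> borel_measurable borel"
proof (rule borel_measurable_continuous_onI)
  show "continuous_on UNIV nonsmooth_part"
    unfolding nonsmooth_part_def[abs_def]
    by (intro continuous_intros lipschitz_on_continuous_on[OF g_lipschitz]) simp
qed

lemma objective_borel [measurable]: "objective \<in> borel_measurable borel"
  unfolding objective_def[abs_def] by measurable

end

section \<open>One step of the method\<close>

locale prox_gradient_step = composite_problem D f df g m L Lg xs
  for D :: "'i measure" and f :: "'i \<Rightarrow> 'a::euclidean_space \<Rightarrow> real" and df g m L Lg xs +
  fixes \<tau> :: real
  assumes tau_pos: "\<tau> > 0" and tau_L: "\<tau> * L < 1 / 4"
begin

definition prox_step :: "'i \<Rightarrow> nat \<Rightarrow> 'a \<Rightarrow> 'a" where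
  "prox_step i j y = prox (\<tau> * real m) (g j) (y - \<tau> *\<^sub>R df i y)"

text \<open>Outside \<open>{1..m}\<close> the functions \<open>g j\<close> are unconstrained; cutting them off there keeps
  \<open>step_bound\<close> measurable in the sampled index.\<close>

definition g_cut :: "nat \<Rightarrow> 'a \<Rightarrow> real" where
  "g_cut j y = (if j \<in> {1..m} then g j y else 0)"

definition step_bound :: "'i \<Rightarrow> nat \<Rightarrow> 'a \<Rightarrow> 'a \<Rightarrow> real" where
  "step_bound i j y z =
     1 / 2 * (norm (z - y))\<^sup>2 + \<tau> * (smooth_part z - objective xs)
     + \<tau> * real m * (g_cut j z - g_cut j y) + \<tau> * nonsmooth_part y
     - \<tau> * ((df i y - smooth_grad y) \<bullet> (y - z)) + \<tau>\<^sup>2 * (norm (df i y - smooth_grad y))\<^sup>2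
     + 8 * \<tau>\<^sup>2 * (real m)\<^sup>2 * Lg\<^sup>2"

lemma prox_step_three_point:
  assumes "j \<in> {1..m}"
  shows "\<tau> * real m * g j (prox_step i j y) + \<tau> * (df i y \<bullet> (prox_step i j y - z))
           + 1 / 2 * (norm (prox_step i j y - y))\<^sup>2 + 1 / 2 * (norm (z - prox_step i j y))\<^sup>2
         \<le> \<tau> * real m * g j z + 1 / 2 * (norm (z - y))\<^sup>2"
proof -
  have "\<tau> * real m > 0" using tau_pos m_pos by simp
  then show ?thesis unfolding prox_step_def
    by (intro is_prox_gradient_step g_convex[OF assms] is_prox_prox[OF g_lipschitz[OF assms]]) simp_all
qed

lemma prox_step_inequality:
  assumes i: "i \<in> space D" and j: "j \<in> {1..m}"
  shows "\<tau> * (objective (prox_step i j y) - objective xs) + 1 / 2 * (norm (z - prox_step i j y))\<^sup>2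
           \<le> step_bound i j y z"
proof -
  define p where "p = prox_step i j y"
  define d where "d = p - y"
  define e where "e = df i y - smooth_grad y"
  have three: "\<tau> * real m * g j p + \<tau> * (df i y \<bullet> (p - z)) + 1 / 2 * (norm d)\<^sup>2 + 1 / 2 * (norm (z - p))\<^sup>2
      \<le> \<tau> * real m * g j z + 1 / 2 * (norm (z - y))\<^sup>2"
    using prox_step_three_point[OF j] by (simp add: p_def d_def)
  have F0: "smooth_part p \<le> smooth_part z + smooth_grad y \<bullet> (p - z) + L / 2 * (norm d)\<^sup>2"
    using smooth_part_upper_bound[of p y] smooth_part_gradient_inequality[of y z]
    by (simp add: d_def inner_diff_right)
  have "(\<tau> * L) * (norm d)\<^sup>2 \<le> 1 / 4 * (norm d)\<^sup>2"
    using tau_L by (intro mult_right_mono) simp_all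
  then have F: "\<tau> * smooth_part p \<le> \<tau> * smooth_part z + \<tau> * (smooth_grad y \<bullet> (p - z)) + (norm d)\<^sup>2 / 8"
    using mult_left_mono[OF F0, of \<tau>] tau_pos by (simp add: algebra_simps)
  have G0: "nonsmooth_part p \<le> nonsmooth_part y + real m * Lg * norm d"
    using abs_le_D1[OF nonsmooth_part_diff_le[of p y]] by (simp add: d_def)
  have G: "\<tau> * nonsmooth_part p \<le> \<tau> * nonsmooth_part y + \<tau> * real m * Lg * norm d"
    using mult_left_mono[OF G0, of \<tau>] tau_pos by (simp add: algebra_simps)
  have g0: "g j y \<le> g j p + Lg * norm d"
    using abs_le_D1[OF g_diff_le[OF j, of y p]] by (simp add: d_def norm_minus_commute)
  have g: "\<tau> * real m * g j y \<le> \<tau> * real m * g j p + \<tau> * real m * Lg * norm d"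
    using mult_left_mono[OF g0, of "\<tau> * real m"] tau_pos by (simp add: algebra_simps)
  have young_e: "- (\<tau> * (e \<bullet> d)) \<le> \<tau>\<^sup>2 * (norm e)\<^sup>2 + (norm d)\<^sup>2 / 4"
    using neg_inner_le[of "\<tau> *\<^sub>R e" d] by (simp add: power_mult_distrib)
  have young_g: "2 * (\<tau> * real m * Lg * norm d) \<le> 8 * \<tau>\<^sup>2 * (real m)\<^sup>2 * Lg\<^sup>2 + (norm d)\<^sup>2 / 8"
    using zero_le_power2[of "4 * \<tau> * real m * Lg - norm d / 2"] by (simp add: power2_eq_square algebra_simps)
  have "\<tau> * (df i y \<bullet> (p - z)) = \<tau> * (smooth_grad y \<bullet> (p - z)) + \<tau> * (e \<bullet> d) + \<tau> * (e \<bullet> (y - z))"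
    by (simp add: e_def d_def inner_diff_left inner_diff_right algebra_simps)
  \<comment> \<open>The error terms \<open>(norm d)\<^sup>2 / 8 + (norm d)\<^sup>2 / 4 + (norm d)\<^sup>2 / 8\<close> cancel the \<open>(norm d)\<^sup>2 / 2\<close> of \<open>three\<close>.\<close>
  then show ?thesis
    using three F G g young_e young_g j
    unfolding objective_def step_bound_def g_cut_def e_def[symmetric] p_def[symmetric]
    by (simp add: algebra_simps)
qed

lemma expected_step_bound:
  fixes M :: "'w measure"
  assumes M: "prob_space M" and "\<epsilon> > 0"
    and I: "I \<in> measurable M D" "distr M D I = D"
    and J: "J \<in> measurable M (count_space UNIV)"
      "distr M (count_space UNIV) J = measure_pmf (pmf_of_set {1..m})"
  shows "integrable M (\<lambda>\<omega>. step_bound (I \<omega>) (J \<omega>) y z)"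
    and "(\<integral>\<omega>. step_bound (I \<omega>) (J \<omega>) y z \<partial>M)
           \<le> 1 / 2 * (norm (z - y))\<^sup>2 + \<tau> * (objective z - objective xs)
             + \<tau> * (2 * \<tau> * L * (1 + \<epsilon>)) * (objective y - objective xs)
             + \<tau> * ((1 + 1 / \<epsilon>) * grad_variance_at_min * \<tau>) + 8 * \<tau>\<^sup>2 * (real m)\<^sup>2 * Lg\<^sup>2"
proof -
  interpret M: prob_space M by (rule M)
  define c where "c = 1 / 2 * (norm (z - y))\<^sup>2 + \<tau> * (smooth_part z - objective xs)
    + \<tau> * nonsmooth_part y + 8 * \<tau>\<^sup>2 * (real m)\<^sup>2 * Lg\<^sup>2"
  define gJ where "gJ = (\<lambda>j. \<tau> * real m * (g_cut j z - g_cut j y))"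
  define fI where "fI = (\<lambda>i. \<tau>\<^sup>2 * (norm (df i y - smooth_grad y))\<^sup>2 - \<tau> * ((df i y - smooth_grad y) \<bullet> (y - z)))"
  have split: "step_bound i j y z = c + gJ j + fI i" for i j
    unfolding step_bound_def c_def gJ_def fI_def by (simp add: algebra_simps)
  have U: "{1..m} \<noteq> {}" "finite {1..m}" using m_pos by auto
  have "integrable (measure_pmf (pmf_of_set {1..m})) gJ"
    using U by (intro integrable_measure_pmf_finite) simp
  then have gJ_int: "integrable M (\<lambda>\<omega>. gJ (J \<omega>))"
    using integrable_distr_eq[OF J(1), of gJ] J(2) by simp
  have fI_int_D: "integrable D fI"
    unfolding fI_def using df_square_integrable[of y "smooth_grad y"] df_integrable[of y] by auto
  then have fI_int: "integrable M (\<lambda>\<omega>. fI (I \<omega>))"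
    using integrable_distr_eq[OF I(1), of fI] I(2) by auto
  show "integrable M (\<lambda>\<omega>. step_bound (I \<omega>) (J \<omega>) y z)"
    unfolding split using gJ_int fI_int by auto
  have "(\<integral>\<omega>. gJ (J \<omega>) \<partial>M) = (\<integral>j. gJ j \<partial>measure_pmf (pmf_of_set {1..m}))"
    using integral_distr[OF J(1), of gJ] J(2) by simp
  also have "\<dots> = (\<Sum>j\<in>{1..m}. gJ j) / real m"
    using integral_pmf_of_set[OF U, of gJ] by simp
  also have "\<dots> = \<tau> * (nonsmooth_part z - nonsmooth_part y)"
    using m_pos by (simp add: gJ_def g_cut_def nonsmooth_part_def sum_subtractf sum_distrib_left[symmetric])
  finally have E_gJ: "(\<integral>\<omega>. gJ (J \<omega>) \<partial>M) = \<tau> * (nonsmooth_part z - nonsmooth_part y)" .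
  have "(\<integral>i. df i y - smooth_grad y \<partial>D) = 0"
    using df_integrable[of y] by (simp add: smooth_grad_def D.prob_space)
  then have "(\<integral>i. fI i \<partial>D) = \<tau>\<^sup>2 * (\<integral>i. (norm (df i y - smooth_grad y))\<^sup>2 \<partial>D)"
    unfolding fI_def using df_square_integrable[of y "smooth_grad y"] df_integrable[of y] by simp
  moreover have "(\<integral>\<omega>. fI (I \<omega>) \<partial>M) = (\<integral>i. fI i \<partial>D)"
    using integral_distr[OF I(1), of fI] I(2) fI_int_D by simp
  ultimately have E_fI: "(\<integral>\<omega>. fI (I \<omega>) \<partial>M)
      \<le> \<tau>\<^sup>2 * ((1 + \<epsilon>) * (2 * L * (objective y - objective xs)) + (1 + 1 / \<epsilon>) * grad_variance_at_min)"
    using grad_variance_le[OF \<open>\<epsilon> > 0\<close>, of y] by (simp add: mult_left_mono)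
  show "(\<integral>\<omega>. step_bound (I \<omega>) (J \<omega>) y z \<partial>M)
      \<le> 1 / 2 * (norm (z - y))\<^sup>2 + \<tau> * (objective z - objective xs)
        + \<tau> * (2 * \<tau> * L * (1 + \<epsilon>)) * (objective y - objective xs)
        + \<tau> * ((1 + 1 / \<epsilon>) * grad_variance_at_min * \<tau>) + 8 * \<tau>\<^sup>2 * (real m)\<^sup>2 * Lg\<^sup>2"
    unfolding split using gJ_int fI_int E_gJ E_fI
    by (simp add: c_def objective_def algebra_simps power2_eq_square M.prob_space)
qed

lemma step_bound_nonneg:
  assumes "i \<in> space D" and "j \<in> {1..m}"
  shows "0 \<le> step_bound i j y z"
proof -
  have "0 \<le> \<tau> * (objective (prox_step i j y) - objective xs) + 1 / 2 * (norm (z - prox_step i j y))\<^sup>2"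
    using tau_pos objective_min[of "prox_step i j y"] by simp
  then show ?thesis
    using prox_step_inequality[OF assms, of y z] by linarith
qed

lemma g_cut_measurable [measurable (raw)]:
  assumes "a \<in> measurable N (count_space UNIV)" and "b \<in> borel_measurable N"
  shows "(\<lambda>q. g_cut (a q) (b q)) \<in> borel_measurable N"
proof (rule measurable_compose_countable'[where I = UNIV and g = a and f = "\<lambda>j q. g_cut j (b q)"])
  fix j
  have "g_cut j \<in> borel_measurable borel"
  proof (cases "j \<in> {1..m}")
    case True
    then have "g_cut j = g j" by (simp add: g_cut_def fun_eq_iff)
    then show ?thesis
      using borel_measurable_continuous_onI[OF lipschitz_on_continuous_on[OF g_lipschitz[OF True]]] by simp
  next
    case False
    then have "g_cut j = (\<lambda>_. 0)" by (auto simp: g_cut_def fun_eq_iff)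
    then show ?thesis by simp
  qed
  then show "(\<lambda>q. g_cut j (b q)) \<in> borel_measurable N"
    using assms(2) by measurable
qed (use assms in auto)

end

section \<open>The potential argument\<close>

lemma alphaw_pos:
  assumes "a > 0" and "t \<le> T"
  shows "alphaw a T t > 0"
  using assms(2) by (induction t) (use assms(1) in auto)

text \<open>With \<open>k = T - t + 1\<close> the recursion says exactly \<open>r = (k + a) / (k + 1)\<close>, i.e.
  \<open>k * (1 - r) + a = r\<close>.\<close>

lemma alphaw_ratio:
  assumes "0 < a" "a < 1" and "t \<le> T"
  defines "r \<equiv> alphaw a T (t - 1) / alphaw a T t"
  shows "alphaw a T (t - 1) = r * alphaw a T t" and "0 < r" and "r \<le> 1"
    and "(real T - real t + 1) * (1 - r) + a \<le> r"
proof -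
  have pos: "alphaw a T t > 0" "alphaw a T (t - 1) > 0"
    using alphaw_pos[OF assms(1)] assms(3) by auto
  then show "alphaw a T (t - 1) = r * alphaw a T t" and "0 < r" by (simp_all add: r_def)
  have "r \<le> 1 \<and> (real T - real t + 1) * (1 - r) + a \<le> r"
  proof (cases t)
    case 0
    then show ?thesis using assms(1,2) by (simp add: r_def)
  next
    case (Suc s)
    define k where "k = real T - real t + 1"
    have "k \<ge> 1" using assms(3) by (simp add: k_def)
    have "alphaw a T s > 0" "k + 1 > 0"
      using pos Suc \<open>k \<ge> 1\<close> by auto
    have "alphaw a T t = (k + 1) / (a + k) * alphaw a T s"
      using Suc by (simp add: k_def algebra_simps)
    moreover have "t - 1 = s" using Suc by simp
    ultimately have "r = alphaw a T s / ((k + 1) / (a + k) * alphaw a T s)"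
      by (simp only: r_def)
    also have "\<dots> = 1 / ((k + 1) / (a + k))"
      using \<open>alphaw a T s > 0\<close> by simp
    also have "\<dots> = (k + a) / (k + 1)" by (simp add: add.commute)
    finally have "r = (k + a) / (k + 1)" .
    moreover have "(k + a) / (k + 1) \<le> 1" and "k * (1 - (k + a) / (k + 1)) + a \<le> (k + a) / (k + 1)"
      using \<open>k + 1 > 0\<close> assms(2) by (simp_all add: field_simps)
    ultimately show ?thesis by (simp add: k_def)
  qed
  then show "r \<le> 1" and "(real T - real t + 1) * (1 - r) + a \<le> r" by auto
qed

locale prox_iteration = prox_gradient_step D f df g m L Lg xs \<tau>
  for D :: "'i measure" and f :: "'i \<Rightarrow> 'a::euclidean_space \<Rightarrow> real" and df g m L Lg xs \<tau> +
  fixes \<epsilon> :: real and M :: "'w measure" and ii jj x x0 and T :: nat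
  assumes prob_space_M: "prob_space M"
    and eps_pos: "\<epsilon> > 0" and a_lt_1: "2 * \<tau> * L * (1 + \<epsilon>) < 1"
    and ii_distr: "\<And>t. ii t \<in> measurable M D \<and> distr M D (ii t) = D"
    and jj_distr: "\<And>t. distr M (count_space UNIV) (jj t) = measure_pmf (pmf_of_set {1..m})"
    and indep_ij: "\<And>t. indep_rv M D (ii t) (count_space UNIV) (jj t)"
    and indep_hist: "\<And>t. indep_rv M
        (D \<Otimes>\<^sub>M count_space UNIV) (\<lambda>\<omega>. (ii t \<omega>, jj t \<omega>))
        (Pi\<^sub>M {..t} (\<lambda>_. borel)) (\<lambda>\<omega>. \<lambda>s\<in>{..t}. x s \<omega>)"
    and x_init: "\<And>\<omega>. \<omega> \<in> space M \<Longrightarrow> x 0 \<omega> = x0"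
    and x_step: "\<And>t \<omega>. \<omega> \<in> space M \<Longrightarrow>
        x (Suc t) \<omega> = prox (\<tau> * real m) (g (jj t \<omega>)) (x t \<omega> - \<tau> *\<^sub>R df (ii t \<omega>) (x t \<omega>))"
begin

sublocale M: prob_space M by (rule prob_space_M)

definition a_rate :: real where
  "a_rate = 2 * \<tau> * L * (1 + \<epsilon>)"

definition noise :: real where
  "noise = (1 + 1 / \<epsilon>) * grad_variance_at_min * \<tau> + 8 * \<tau> * (real m)\<^sup>2 * Lg\<^sup>2"

definition alpha :: "nat \<Rightarrow> real" where
  "alpha t = alphaw a_rate T t"

text \<open>The truncated subtraction gives \<open>\<alpha>\<^sub>-\<^sub>1 = \<alpha>\<^sub>0 = 1\<close>, as in the paper.\<close>

definition alpha_prev :: "nat \<Rightarrow> real" where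
  "alpha_prev t = alphaw a_rate T (t - 1)"

definition anchor_weight :: "nat \<Rightarrow> real" where
  "anchor_weight t = alpha_prev t * (real T - real t + 1)"

primrec anchor :: "(nat \<Rightarrow> 'a) \<Rightarrow> nat \<Rightarrow> 'a" where
  "anchor X 0 = xs"
| "anchor X (Suc t) = (alpha_prev t / alpha t) *\<^sub>R anchor X t + (1 - alpha_prev t / alpha t) *\<^sub>R X t"

definition potential :: "nat \<Rightarrow> (nat \<Rightarrow> 'a) \<Rightarrow> real" where
  "potential t X = \<tau> * alpha_prev t * (objective (X t) - objective xs)
     + 1 / 2 * alpha_prev t * (norm (anchor X t - X t))\<^sup>2
     + \<tau> * anchor_weight t * (objective (anchor X t) - objective xs)"

lemma a_rate_pos: "a_rate > 0" and a_rate_lt_1: "a_rate < 1"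
  using tau_pos L_pos eps_pos a_lt_1 by (simp_all add: a_rate_def)

lemma alpha_pos: "t \<le> T \<Longrightarrow> alpha t > 0"
  unfolding alpha_def by (rule alphaw_pos[OF a_rate_pos])

lemma alpha_prev_Suc: "alpha_prev (Suc t) = alpha t"
  by (simp add: alpha_prev_def alpha_def)

lemma noise_nonneg: "noise \<ge> 0"
  using tau_pos eps_pos by (simp add: noise_def grad_variance_at_min_def)

lemma anchor_cong: "(\<And>s. s < t \<Longrightarrow> X s = X' s) \<Longrightarrow> anchor X t = anchor X' t"
  by (induction t) auto

lemma potential_cong: "(\<And>s. s \<le> t \<Longrightarrow> X s = X' s) \<Longrightarrow> potential t X = potential t X'"
  unfolding potential_def using anchor_cong[of t X X'] by simp

lemma alpha_ratio:
  assumes "t \<le> T"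
  defines "r \<equiv> alpha_prev t / alpha t"
  shows "alpha_prev t = r * alpha t" and "0 < r" and "r \<le> 1"
    and "(real T - real t + 1) * (1 - r) + a_rate \<le> r"
  using alphaw_ratio[OF a_rate_pos a_rate_lt_1 assms(1)] unfolding r_def alpha_prev_def alpha_def by auto

lemma anchor_dist_le:
  assumes "t \<le> T"
  shows "alpha t * (norm (anchor X (Suc t) - X t))\<^sup>2 \<le> alpha_prev t * (norm (anchor X t - X t))\<^sup>2"
proof -
  define r where "r = alpha_prev t / alpha t"
  note r = alpha_ratio[OF assms, folded r_def]
  have "alpha t * (norm (anchor X (Suc t) - X t))\<^sup>2 = alpha t * r * r * (norm (anchor X t - X t))\<^sup>2"
    by (simp add: r_def[symmetric] algebra_simps power_mult_distrib power2_eq_square flip: scaleR_diff_right)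
  also have "\<dots> \<le> alpha_prev t * (norm (anchor X t - X t))\<^sup>2"
    using alpha_pos[OF assms] r by (simp add: mult_left_le_one_le)
  finally show ?thesis .
qed

lemma anchor_objective_gap_le:
  assumes "t \<le> T"
  defines "k \<equiv> real T - real t + 1"
  shows "alpha t * k * (objective (anchor X (Suc t)) - objective xs) + alpha t * a_rate * (objective (X t) - objective xs)
      \<le> alpha_prev t * k * (objective (anchor X t) - objective xs) + alpha_prev t * (objective (X t) - objective xs)"
proof -
  define r where "r = alpha_prev t / alpha t"
  define Z where "Z = anchor X t"
  define y where "y = X t"
  note r = alpha_ratio[OF assms(1), folded r_def k_def]
  have "alpha t > 0" using alpha_pos[OF assms(1)] .
  have gaps: "objective Z - objective xs \<ge> 0" "objective y - objective xs \<ge> 0"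
    using objective_min by auto
  have "objective (anchor X (Suc t)) - objective xs
      \<le> r * (objective Z - objective xs) + (1 - r) * (objective y - objective xs)"
    using convex_onD[OF objective_convex, of "1 - r" Z y] r(2,3)
    by (simp add: r_def[symmetric] Z_def[symmetric] y_def[symmetric] algebra_simps)
  moreover have "alpha t * k \<ge> 0" using \<open>alpha t > 0\<close> assms(1) by (simp add: k_def)
  ultimately have "alpha t * k * (objective (anchor X (Suc t)) - objective xs)
      \<le> alpha t * k * (r * (objective Z - objective xs) + (1 - r) * (objective y - objective xs))"
    by (rule mult_left_mono)
  then have "alpha t * k * (objective (anchor X (Suc t)) - objective xs) + alpha t * a_rate * (objective y - objective xs)
      \<le> alpha t * (k * r) * (objective Z - objective xs) + alpha t * (k * (1 - r) + a_rate) * (objective y - objective xs)"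
    by (simp add: algebra_simps)
  also have "\<dots> \<le> alpha t * (k * r) * (objective Z - objective xs) + alpha t * r * (objective y - objective xs)"
    using \<open>alpha t > 0\<close> r(4) gaps by (intro add_left_mono mult_right_mono mult_left_mono) auto
  finally show ?thesis
    using r(1) by (simp add: Z_def y_def algebra_simps)
qed

lemma potential_decrease:
  fixes X :: "nat \<Rightarrow> 'a"
  assumes "t \<le> T"
  defines "Z' \<equiv> anchor X (Suc t)"
  shows "alpha t * (1 / 2 * (norm (Z' - X t))\<^sup>2 + \<tau> * (objective Z' - objective xs)
            + \<tau> * a_rate * (objective (X t) - objective xs)
            + \<tau> * ((1 + 1 / \<epsilon>) * grad_variance_at_min * \<tau>) + 8 * \<tau>\<^sup>2 * (real m)\<^sup>2 * Lg\<^sup>2)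
         + \<tau> * anchor_weight (Suc t) * (objective Z' - objective xs)
         \<le> potential t X + \<tau> * alpha t * noise"
proof -
  define k where "k = real T - real t + 1"
  have weights: "anchor_weight (Suc t) = alpha t * (k - 1)" "anchor_weight t = alpha_prev t * k"
    by (simp_all add: anchor_weight_def alpha_prev_Suc k_def)
  have "\<tau> * (alpha t * k * (objective Z' - objective xs) + alpha t * a_rate * (objective (X t) - objective xs))
      \<le> \<tau> * (alpha_prev t * k * (objective (anchor X t) - objective xs)
        + alpha_prev t * (objective (X t) - objective xs))"
    using anchor_objective_gap_le[OF assms(1), of X, folded k_def Z'_def] tau_pos by (simp add: mult_left_mono)
  then show ?thesis
    using anchor_dist_le[OF assms(1), of X, folded Z'_def]
    unfolding potential_def noise_def weights
    by (simp add: algebra_simps power2_eq_square)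
qed

lemma potential_zero: "potential 0 X = \<tau> * (objective (X 0) - objective xs) + 1 / 2 * (norm (xs - X 0))\<^sup>2"
  by (simp add: potential_def alpha_prev_def)

lemma anchor_measurable: "t \<le> Suc n \<Longrightarrow> (\<lambda>H. anchor H t) \<in> borel_measurable (Pi\<^sub>M {..n} (\<lambda>_. borel))"
proof (induction t)
  case (Suc t)
  then have "(\<lambda>H. H t) \<in> borel_measurable (Pi\<^sub>M {..n} (\<lambda>_. borel))"
    using measurable_component_singleton[of t "{..n}" "\<lambda>_. borel"] by simp
  with Suc show ?case by simp
qed simp

lemma potential_measurable: "(\<lambda>H. potential t H) \<in> borel_measurable (Pi\<^sub>M {..t} (\<lambda>_. borel))"
proof -
  have [measurable]: "(\<lambda>H. anchor H t) \<in> borel_measurable (Pi\<^sub>M {..t} (\<lambda>_. borel))"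
    by (rule anchor_measurable) simp
  have [measurable]: "(\<lambda>H. H t) \<in> borel_measurable (Pi\<^sub>M {..t} (\<lambda>_. borel))"
    using measurable_component_singleton[of t "{..t}" "\<lambda>_. borel"] by simp
  show ?thesis unfolding potential_def by measurable
qed

lemma ii_measurable: "ii t \<in> measurable M D"
  using ii_distr by simp

lemma jj_measurable: "jj t \<in> measurable M (count_space UNIV)"
  using indep_ij[of t] by (simp add: indep_rv_def)

lemma history_measurable: "(\<lambda>\<omega>. \<lambda>s\<in>{..t}. x s \<omega>) \<in> measurable M (Pi\<^sub>M {..t} (\<lambda>_. borel))"
  using indep_hist[of t] by (simp add: indep_rv_def)

lemma x_measurable [measurable]: "x t \<in> borel_measurable M"
  using measurable_compose[OF history_measurable measurable_component_singleton[of t "{..t}"]] by simp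

lemma jj_in_range: "AE \<omega> in M. jj t \<omega> \<in> {1..m}"
proof -
  have "{1..m} \<noteq> {}" "finite {1..m}" using m_pos by auto
  then have "AE j in distr M (count_space UNIV) (jj t). j \<in> {1..m}"
    unfolding jj_distr AE_measure_pmf_iff by simp
  then show ?thesis by (subst (asm) AE_distr_iff[OF jj_measurable]) auto
qed

lemma conditional_step_bound:
  fixes H :: "nat \<Rightarrow> 'a"
  assumes "t \<le> T" and "K \<ge> 0"
  defines "Z' \<equiv> anchor H (Suc t)"
  shows "(\<integral>\<^sup>+ \<omega>. ennreal (alpha t * step_bound (ii t \<omega>) (jj t \<omega>) (H t) Z'
            + \<tau> * anchor_weight (Suc t) * (objective Z' - objective xs) + K) \<partial>M)
         \<le> ennreal (potential t H + \<tau> * alpha t * noise + K)"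
proof -
  define c where "c = \<tau> * anchor_weight (Suc t) * (objective Z' - objective xs) + K"
  have "alpha t > 0" using alpha_pos[OF assms(1)] .
  have "c \<ge> 0"
    using \<open>alpha t > 0\<close> assms tau_pos objective_min[of Z']
    by (simp add: c_def anchor_weight_def alpha_prev_Suc)
  have int: "integrable M (\<lambda>\<omega>. step_bound (ii t \<omega>) (jj t \<omega>) (H t) Z')"
    and exp: "(\<integral>\<omega>. step_bound (ii t \<omega>) (jj t \<omega>) (H t) Z' \<partial>M)
      \<le> 1 / 2 * (norm (Z' - H t))\<^sup>2 + \<tau> * (objective Z' - objective xs)
        + \<tau> * a_rate * (objective (H t) - objective xs)
        + \<tau> * ((1 + 1 / \<epsilon>) * grad_variance_at_min * \<tau>) + 8 * \<tau>\<^sup>2 * (real m)\<^sup>2 * Lg\<^sup>2"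
    using expected_step_bound[OF prob_space_M eps_pos ii_measurable _ jj_measurable jj_distr]
      ii_distr unfolding a_rate_def by auto
  have "AE \<omega> in M. 0 \<le> alpha t * step_bound (ii t \<omega>) (jj t \<omega>) (H t) Z' + c"
    using jj_in_range[of t] AE_space
  proof eventually_elim
    case (elim \<omega>)
    have "ii t \<omega> \<in> space D" using measurable_space[OF ii_measurable elim(2)] .
    then have "0 \<le> step_bound (ii t \<omega>) (jj t \<omega>) (H t) Z'" using elim(1) by (rule step_bound_nonneg)
    then show ?case using \<open>alpha t > 0\<close> \<open>c \<ge> 0\<close> by simp
  qed
  then have "(\<integral>\<^sup>+ \<omega>. ennreal (alpha t * step_bound (ii t \<omega>) (jj t \<omega>) (H t) Z' + c) \<partial>M)
      = ennreal (alpha t * (\<integral>\<omega>. step_bound (ii t \<omega>) (jj t \<omega>) (H t) Z' \<partial>M) + c)"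
    using int by (subst nn_integral_eq_integral) (auto simp: M.prob_space)
  also have "\<dots> \<le> ennreal (potential t H + \<tau> * alpha t * noise + K)"
  proof (rule ennreal_leI)
    have "alpha t * (\<integral>\<omega>. step_bound (ii t \<omega>) (jj t \<omega>) (H t) Z' \<partial>M)
        \<le> alpha t * (1 / 2 * (norm (Z' - H t))\<^sup>2 + \<tau> * (objective Z' - objective xs)
          + \<tau> * a_rate * (objective (H t) - objective xs)
          + \<tau> * ((1 + 1 / \<epsilon>) * grad_variance_at_min * \<tau>) + 8 * \<tau>\<^sup>2 * (real m)\<^sup>2 * Lg\<^sup>2)"
      using \<open>alpha t > 0\<close> by (intro mult_left_mono[OF exp]) simp
    then show "alpha t * (\<integral>\<omega>. step_bound (ii t \<omega>) (jj t \<omega>) (H t) Z' \<partial>M) + c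
        \<le> potential t H + \<tau> * alpha t * noise + K"
      using potential_decrease[OF assms(1), of H, folded Z'_def] unfolding c_def by linarith
  qed
  finally show ?thesis by (simp add: c_def add.assoc)
qed

lemma potential_Suc_le:
  fixes \<omega> :: 'w
  assumes "t \<le> T" and "\<omega> \<in> space M" and "jj t \<omega> \<in> {1..m}"
  defines "Z' \<equiv> anchor (\<lambda>s. x s \<omega>) (Suc t)"
  shows "potential (Suc t) (\<lambda>s. x s \<omega>)
           \<le> alpha t * step_bound (ii t \<omega>) (jj t \<omega>) (x t \<omega>) Z'
             + \<tau> * anchor_weight (Suc t) * (objective Z' - objective xs)"
proof -
  have "ii t \<omega> \<in> space D" using measurable_space[OF ii_measurable assms(2)] .
  from prox_step_inequality[OF this assms(3), of "x t \<omega>" Z']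
  have "\<tau> * (objective (x (Suc t) \<omega>) - objective xs) + 1 / 2 * (norm (Z' - x (Suc t) \<omega>))\<^sup>2
      \<le> step_bound (ii t \<omega>) (jj t \<omega>) (x t \<omega>) Z'"
    using x_step[OF assms(2)] by (simp add: prox_step_def)
  from mult_left_mono[OF this, of "alpha t"] show ?thesis
    using alpha_pos[OF assms(1)]
    by (simp add: potential_def alpha_prev_Suc Z'_def algebra_simps)
qed

lemma step_integrand_measurable:
  "(\<lambda>q. ennreal (alpha t * step_bound (fst (fst q)) (snd (fst q)) (snd q t) (anchor (snd q) (Suc t))
      + \<tau> * anchor_weight (Suc t) * (objective (anchor (snd q) (Suc t)) - objective xs) + K))
   \<in> borel_measurable ((D \<Otimes>\<^sub>M count_space UNIV) \<Otimes>\<^sub>M Pi\<^sub>M {..t} (\<lambda>_. borel))"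
proof -
  have [measurable]: "(\<lambda>q. snd q t) \<in> borel_measurable ((D \<Otimes>\<^sub>M count_space UNIV) \<Otimes>\<^sub>M Pi\<^sub>M {..t} (\<lambda>_. borel))"
    using measurable_compose[OF measurable_snd measurable_component_singleton[of t "{..t}" "\<lambda>_. borel"]]
    by simp
  have [measurable]: "(\<lambda>q. anchor (snd q) (Suc t)) \<in> borel_measurable ((D \<Otimes>\<^sub>M count_space UNIV) \<Otimes>\<^sub>M Pi\<^sub>M {..t} (\<lambda>_. borel))"
    using measurable_compose[OF measurable_snd anchor_measurable[of "Suc t" t]] by simp
  show ?thesis unfolding step_bound_def by measurable
qed

text \<open>The constant \<open>K\<close> lets the bound be iterated inside nonnegative integrals, without
  splitting off integrals of the (not necessarily integrable) potential.\<close>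

lemma expected_potential_decrease:
  assumes "t \<le> T" and "K \<ge> 0"
  shows "(\<integral>\<^sup>+ \<omega>. ennreal (potential (Suc t) (\<lambda>s. x s \<omega>) + K) \<partial>M)
           \<le> (\<integral>\<^sup>+ \<omega>. ennreal (potential t (\<lambda>s. x s \<omega>) + \<tau> * alpha t * noise + K) \<partial>M)"
proof -
  define \<Phi> where "\<Phi> = (\<lambda>q. ennreal (alpha t * step_bound (fst (fst q)) (snd (fst q)) (snd q t) (anchor (snd q) (Suc t))
      + \<tau> * anchor_weight (Suc t) * (objective (anchor (snd q) (Suc t)) - objective xs) + K))"
  define Q where "Q = (\<lambda>H. ennreal (potential t H + \<tau> * alpha t * noise + K))"
  let ?hist = "\<lambda>\<omega>. \<lambda>s\<in>{..t}. x s \<omega>"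
  have "(\<integral>\<^sup>+ \<omega>. ennreal (potential (Suc t) (\<lambda>s. x s \<omega>) + K) \<partial>M)
      \<le> (\<integral>\<^sup>+ \<omega>. \<Phi> ((ii t \<omega>, jj t \<omega>), ?hist \<omega>) \<partial>M)"
  proof (rule nn_integral_mono_AE)
    show "AE \<omega> in M. ennreal (potential (Suc t) (\<lambda>s. x s \<omega>) + K) \<le> \<Phi> ((ii t \<omega>, jj t \<omega>), ?hist \<omega>)"
      using jj_in_range[of t] AE_space
    proof eventually_elim
      case (elim \<omega>)
      have "anchor (?hist \<omega>) (Suc t) = anchor (\<lambda>s. x s \<omega>) (Suc t)" by (rule anchor_cong) simp
      moreover have "?hist \<omega> t = x t \<omega>" by simp
      moreover have "potential (Suc t) (\<lambda>s. x s \<omega>) + K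
          \<le> alpha t * step_bound (ii t \<omega>) (jj t \<omega>) (x t \<omega>) (anchor (\<lambda>s. x s \<omega>) (Suc t))
            + \<tau> * anchor_weight (Suc t) * (objective (anchor (\<lambda>s. x s \<omega>) (Suc t)) - objective xs) + K"
        using potential_Suc_le[OF assms(1) elim(2,1)] by linarith
      ultimately show ?case unfolding \<Phi>_def fst_conv snd_conv by (simp only:) (rule ennreal_leI)
    qed
  qed
  also have "\<dots> \<le> (\<integral>\<^sup>+ \<omega>. Q (?hist \<omega>) \<partial>M)"
  proof (rule nn_integral_indep_rv_le[OF prob_space_M indep_hist])
    show "\<Phi> \<in> borel_measurable ((D \<Otimes>\<^sub>M count_space UNIV) \<Otimes>\<^sub>M Pi\<^sub>M {..t} (\<lambda>_. borel))"
      unfolding \<Phi>_def by (rule step_integrand_measurable)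
    show "Q \<in> borel_measurable (Pi\<^sub>M {..t} (\<lambda>_. borel))"
      unfolding Q_def using potential_measurable[of t] by measurable
    show "(\<integral>\<^sup>+ \<omega>. \<Phi> ((ii t \<omega>, jj t \<omega>), H) \<partial>M) \<le> Q H" for H
      unfolding \<Phi>_def Q_def using conditional_step_bound[OF assms] by simp
  qed
  also have "\<dots> = (\<integral>\<^sup>+ \<omega>. ennreal (potential t (\<lambda>s. x s \<omega>) + \<tau> * alpha t * noise + K) \<partial>M)"
    unfolding Q_def by (intro nn_integral_cong arg_cong[where f = ennreal] arg_cong2[where f = "(+)"]
      potential_cong) simp_all
  finally show ?thesis .
qed

lemma expected_potential_le:
  assumes "n \<le> Suc T" and "K \<ge> 0"
  shows "(\<integral>\<^sup>+ \<omega>. ennreal (potential n (\<lambda>s. x s \<omega>) + K) \<partial>M)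
           \<le> ennreal (potential 0 (\<lambda>_. x0) + \<tau> * noise * (\<Sum>t<n. alpha t) + K)"
  using assms
proof (induction n arbitrary: K)
  case 0
  have "(\<integral>\<^sup>+ \<omega>. ennreal (potential 0 (\<lambda>s. x s \<omega>) + K) \<partial>M) = (\<integral>\<^sup>+ \<omega>. ennreal (potential 0 (\<lambda>_. x0) + K) \<partial>M)"
    by (intro nn_integral_cong) (simp add: potential_zero x_init)
  then show ?case by (simp add: M.emeasure_space_1)
next
  case (Suc n)
  have "0 \<le> \<tau> * alpha n * noise + K"
    using Suc.prems tau_pos alpha_pos[of n] noise_nonneg by simp
  have "(\<integral>\<^sup>+ \<omega>. ennreal (potential (Suc n) (\<lambda>s. x s \<omega>) + K) \<partial>M)
      \<le> (\<integral>\<^sup>+ \<omega>. ennreal (potential n (\<lambda>s. x s \<omega>) + (\<tau> * alpha n * noise + K)) \<partial>M)"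
    using expected_potential_decrease[of n K] Suc.prems by (simp add: add.assoc)
  also have "\<dots> \<le> ennreal (potential 0 (\<lambda>_. x0) + \<tau> * noise * (\<Sum>t<n. alpha t) + (\<tau> * alpha n * noise + K))"
    using Suc.IH[OF _ \<open>0 \<le> \<tau> * alpha n * noise + K\<close>] Suc.prems by simp
  finally show ?case by (simp add: algebra_simps)
qed

lemma expected_objective_gap_le:
  "(\<integral>\<^sup>+ \<omega>. ennreal (objective (x (Suc T) \<omega>) - objective xs) \<partial>M)
     \<le> ennreal ((potential 0 (\<lambda>_. x0) + \<tau> * noise * (\<Sum>t<Suc T. alpha t)) / (\<tau> * alpha T))"
proof -
  define c where "c = \<tau> * alpha T"
  have "c > 0" using tau_pos alpha_pos[of T] by (simp add: c_def)
  have gap: "ennreal (objective (x (Suc T) \<omega>) - objective xs)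
      = ennreal (1 / c) * ennreal (c * (objective (x (Suc T) \<omega>) - objective xs))" for \<omega>
    using \<open>c > 0\<close> objective_min[of "x (Suc T) \<omega>"] by (simp add: ennreal_mult[symmetric])
  \<comment> \<open>The last anchor carries zero weight, so the potential at \<open>T + 1\<close> bounds the objective gap.\<close>
  have last: "c * (objective (x (Suc T) \<omega>) - objective xs) \<le> potential (Suc T) (\<lambda>s. x s \<omega>) + 0" for \<omega>
    using alpha_pos[of T] by (simp add: potential_def anchor_weight_def alpha_prev_Suc c_def)
  have "potential 0 (\<lambda>_. x0) \<ge> 0"
    using tau_pos objective_min[of x0] by (simp add: potential_zero)
  moreover have "(\<Sum>t<Suc T. alpha t) \<ge> 0" using alpha_pos by (intro sum_nonneg) (simp add: less_imp_le)
  ultimately have bound_nonneg: "potential 0 (\<lambda>_. x0) + \<tau> * noise * (\<Sum>t<Suc T. alpha t) \<ge> 0"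
    using tau_pos noise_nonneg by simp
  have "(\<lambda>\<omega>. ennreal (c * (objective (x (Suc T) \<omega>) - objective xs))) \<in> borel_measurable M"
    by measurable
  then have "(\<integral>\<^sup>+ \<omega>. ennreal (objective (x (Suc T) \<omega>) - objective xs) \<partial>M)
      = ennreal (1 / c) * (\<integral>\<^sup>+ \<omega>. ennreal (c * (objective (x (Suc T) \<omega>) - objective xs)) \<partial>M)"
    unfolding gap by (rule nn_integral_cmult)
  also have "\<dots> \<le> ennreal (1 / c) * (\<integral>\<^sup>+ \<omega>. ennreal (potential (Suc T) (\<lambda>s. x s \<omega>) + 0) \<partial>M)"
    using last by (intro mult_left_mono nn_integral_mono ennreal_leI) simp_all
  also have "\<dots> \<le> ennreal (1 / c) * ennreal (potential 0 (\<lambda>_. x0) + \<tau> * noise * (\<Sum>t<Suc T. alpha t) + 0)"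
    by (intro mult_left_mono expected_potential_le) simp_all
  also have "\<dots> = ennreal ((potential 0 (\<lambda>_. x0) + \<tau> * noise * (\<Sum>t<Suc T. alpha t)) / c)"
    using \<open>c > 0\<close> bound_nonneg by (subst ennreal_mult[symmetric]) auto
  finally show ?thesis by (simp add: c_def)
qed

lemma expected_objective_gap_le_explicit:
  defines "v \<equiv> (1 + 1 / \<epsilon>) * grad_variance_at_min * \<tau>"
  shows "(\<integral>\<^sup>+ \<omega>. ennreal (objective (x (Suc T) \<omega>) - objective xs) \<partial>M)
     \<le> ennreal (1 / (2 * \<tau> * alpha T) * (norm (x0 - xs))\<^sup>2
         + v * alpha 0 / alpha T
         + v / alpha T * (\<Sum>t = 1..T. alpha t)
         + 1 / alpha T * (objective x0 - objective xs)
         + 8 * \<tau> * (real m)\<^sup>2 * Lg\<^sup>2 / alpha T * (\<Sum>t = 0..T. alpha t))"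
proof -
  define A where "A = alpha T"
  define S where "S = (\<Sum>t = 1..T. alpha t)"
  define w where "w = 8 * \<tau> * (real m)\<^sup>2 * Lg\<^sup>2"
  have "A > 0" using alpha_pos by (simp add: A_def)
  have "alpha 0 = 1" by (simp add: alpha_def)
  have sums: "(\<Sum>t<Suc T. alpha t) = 1 + S" "(\<Sum>t = 0..T. alpha t) = 1 + S"
    by (simp_all add: S_def lessThan_Suc_atMost sum.atLeast_Suc_atMost atLeast0AtMost[symmetric] \<open>alpha 0 = 1\<close>)
  have "noise = v + w" by (simp add: noise_def v_def w_def)
  have "(\<tau> * d + 1 / 2 * n + \<tau> * (v + w) * (1 + S)) / (\<tau> * A)
      = 1 / (2 * \<tau> * A) * n + v * 1 / A + v / A * S + 1 / A * d + w / A * (1 + S)" for d n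
    using tau_pos \<open>A > 0\<close> by (simp add: field_simps)
  with expected_objective_gap_le show ?thesis
    unfolding w_def[symmetric] A_def[symmetric] S_def[symmetric] sums \<open>alpha 0 = 1\<close> potential_zero \<open>noise = v + w\<close>
    by (simp add: norm_minus_commute mult.assoc)
qed

end

theorem lemmaB4:
  fixes M :: "'w measure" and D :: "'i measure"
    and f :: "'i \<Rightarrow> 'a::euclidean_space \<Rightarrow> real" and df :: "'i \<Rightarrow> 'a \<Rightarrow> 'a"
    and g :: "nat \<Rightarrow> 'a \<Rightarrow> real" and m :: nat
    and L Lg \<tau> \<epsilon> :: real and T :: nat
    and xs x0 :: 'a
    and ii :: "nat \<Rightarrow> 'w \<Rightarrow> 'i" and jj :: "nat \<Rightarrow> 'w \<Rightarrow> nat"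
    and x :: "nat \<Rightarrow> 'w \<Rightarrow> 'a"
  defines "F \<equiv> (\<lambda>y. \<integral>i. f i y \<partial>D)"
    and "G \<equiv> (\<lambda>y. \<Sum>j = 1..m. g j y)"
  defines "h \<equiv> (\<lambda>y. F y + G y)"
  assumes M: "prob_space M" and Dprob: "prob_space D"
    and Lpos: "L > 0" and m1: "m \<ge> 1"
    (* the components f_i *)
    and fconv: "\<And>i. i \<in> space D \<Longrightarrow> convex_on UNIV (f i)"
    and fderiv: "\<And>i y. i \<in> space D \<Longrightarrow> (f i has_derivative (\<lambda>u. df i y \<bullet> u)) (at y)"
    and fLip: "\<And>i. i \<in> space D \<Longrightarrow> L-lipschitz_on UNIV (df i)"
    and f_meas: "(\<lambda>p. f (fst p) (snd p)) \<in> borel_measurable (D \<Otimes>\<^sub>M borel)"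
    and df_meas: "(\<lambda>p. df (fst p) (snd p)) \<in> borel_measurable (D \<Otimes>\<^sub>M borel)"
    and f_int: "\<And>y. integrable D (\<lambda>i. f i y)"
    and df_int: "\<And>y. integrable D (\<lambda>i. df i y)"
    and F_grad: "\<And>y. (F has_derivative (\<lambda>u. (\<integral>i. df i y \<partial>D) \<bullet> u)) (at y)"
    (* the components g_j *)
    and gconv: "\<And>j. j \<in> {1..m} \<Longrightarrow> convex_on UNIV (g j)"
    and glsc: "\<And>j. j \<in> {1..m} \<Longrightarrow> lsc (g j)"
    and gLip: "\<And>j. j \<in> {1..m} \<Longrightarrow> Lg-lipschitz_on UNIV (g j)"
    (* minimizer with finite gradient variance *)
    and xs_min: "\<And>y. h xs \<le> h y"
    and sigma_fin: "integrable D (\<lambda>i. (norm (df i xs))\<^sup>2)"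
    (* step size and parameters *)
    and T1: "T \<ge> 1" and tau_pos: "\<tau> > 0" and tauL: "\<tau> * L < 1/4"
    and eps_pos: "\<epsilon> > 0" and a_lt: "2 * \<tau> * L * (1 + \<epsilon>) < 1"
    (* sampling *)
    and ii_distr: "\<And>t. ii t \<in> measurable M D \<and> distr M D (ii t) = D"
    and jj_distr: "\<And>t. distr M (count_space UNIV) (jj t) = measure_pmf (pmf_of_set {1..m})"
    and indep_ij: "\<And>t. indep_rv M D (ii t) (count_space UNIV) (jj t)"
    and indep_hist: "\<And>t. indep_rv M
        (D \<Otimes>\<^sub>M count_space UNIV) (\<lambda>\<omega>. (ii t \<omega>, jj t \<omega>))
        (Pi\<^sub>M {..t} (\<lambda>_. borel)) (\<lambda>\<omega>. \<lambda>s\<in>{..t}. x s \<omega>)"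
    (* the iteration *)
    and x_init: "\<And>\<omega>. \<omega> \<in> space M \<Longrightarrow> x 0 \<omega> = x0"
    and x_step: "\<And>t \<omega>. \<omega> \<in> space M \<Longrightarrow>
        x (Suc t) \<omega> = prox (\<tau> * real m) (g (jj t \<omega>)) (x t \<omega> - \<tau> *\<^sub>R df (ii t \<omega>) (x t \<omega>))"
  shows "(let a = 2 * \<tau> * L * (1 + \<epsilon>);
              \<sigma>2 = (\<integral>i. (norm (df i xs))\<^sup>2 \<partial>D);
              v = (1 + 1 / \<epsilon>) * \<sigma>2 * \<tau>;
              \<alpha> = alphaw a T
          in (\<integral>\<^sup>+ \<omega>. ennreal (h (x (Suc T) \<omega>) - h xs) \<partial>M)
             \<le> ennreal (1 / (2 * \<tau> * \<alpha> T) * (norm (x0 - xs))\<^sup>2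
                 + v * \<alpha> 0 / \<alpha> T
                 + v / \<alpha> T * (\<Sum>t = 1..T. \<alpha> t)
                 + 1 / \<alpha> T * (h x0 - h xs)
                 + 8 * \<tau> * (real m)\<^sup>2 * Lg\<^sup>2 / \<alpha> T * (\<Sum>t = 0..T. \<alpha> t)))"
proof -
  have problem: "composite_problem D f df g m L Lg xs"
  proof (rule composite_problem.intro)
    show "\<And>y. (\<integral>i. f i xs \<partial>D) + (\<Sum>j = 1..m. g j xs) \<le> (\<integral>i. f i y \<partial>D) + (\<Sum>j = 1..m. g j y)"
      using xs_min unfolding h_def F_def G_def .
    show "\<And>y. ((\<lambda>y. \<integral>i. f i y \<partial>D) has_derivative (\<lambda>u. (\<integral>i. df i y \<partial>D) \<bullet> u)) (at y)"
      using F_grad unfolding F_def .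
  qed (fact assms)+
  interpret prox_iteration D f df g m L Lg xs \<tau> \<epsilon> M ii jj x x0 T
    by (intro prox_iteration.intro prox_gradient_step.intro problem prox_gradient_step_axioms.intro
        prox_iteration_axioms.intro) (fact assms)+
  have "h = objective"
    by (simp add: fun_eq_iff h_def F_def G_def objective_def smooth_part_def nonsmooth_part_def)
  moreover have "alphaw (2 * \<tau> * L * (1 + \<epsilon>)) T = alpha"
    by (simp add: fun_eq_iff alpha_def a_rate_def)
  ultimately show ?thesis
    using expected_objective_gap_le_explicit unfolding Let_def grad_variance_at_min_def by simp
qed

end
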